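(* If $G$ is a connected graph, then $\mathrm{gp}(G)\ge \omega(G_{\rm SR})$. Moreover, equality holds if and only if $G$ contains a gp-set that induces a complete subgraph of $G_{\rm SR}$.
   Context: All graphs are finite and simple. For a connected graph $G$, $d_G(u,v)$ is the distance between $u$ and $v$, and a geodesic is a shortest path. A set $S\subseteq V(G)$ is a general position set if no three pairwise distinct vertices of $S$ lie on a common geodesic of $G$; $\mathrm{gp}(G)$ is the maximum cardinality of a general position set, and a gp-set is a general position set of cardinality $\mathrm{gp}(G)$. A vertex $u$ is maximally distant from a vertex $v$ if every neighbor $w$ of $u$ satisfies $d_G(v,w)\le d_G(u,v)$; $u$ and $v$ are mutually maximally distant (MMD) if each is maximally distant from the other. The strong resolving graph $G_{\rm SR}$ has vertex set $V(G)$, two distinct vertices being adjacent in $G_{\rm SR}$ iff they are MMD in $G$. $\omega$ denotes the clique number. *)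

theory Defs
  imports Main
begin

definition simple_graph :: "'a set \<Rightarrow> ('a \<Rightarrow> 'a \<Rightarrow> bool) \<Rightarrow> bool" where
  "simple_graph V E \<longleftrightarrow> finite V \<and> (\<forall>u v. E u v \<longrightarrow> u \<in> V \<and> v \<in> V) \<and>
     (\<forall>u v. E u v \<longrightarrow> E v u) \<and> (\<forall>u. \<not> E u u)"

definition walk :: "'a set \<Rightarrow> ('a \<Rightarrow> 'a \<Rightarrow> bool) \<Rightarrow> 'a list \<Rightarrow> bool" where
  "walk V E xs \<longleftrightarrow> xs \<noteq> [] \<and> set xs \<subseteq> V \<and> (\<forall>i. Suc i < length xs \<longrightarrow> E (xs ! i) (xs ! Suc i))"

definition connected_graph :: "'a set \<Rightarrow> ('a \<Rightarrow> 'a \<Rightarrow> bool) \<Rightarrow> bool" where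
  "connected_graph V E \<longleftrightarrow> V \<noteq> {} \<and>
     (\<forall>u\<in>V. \<forall>v\<in>V. \<exists>xs. walk V E xs \<and> hd xs = u \<and> last xs = v)"

definition gdist :: "'a set \<Rightarrow> ('a \<Rightarrow> 'a \<Rightarrow> bool) \<Rightarrow> 'a \<Rightarrow> 'a \<Rightarrow> nat" where
  "gdist V E u v = (LEAST n. \<exists>xs. walk V E xs \<and> hd xs = u \<and> last xs = v \<and> length xs = Suc n)"

definition geodesic :: "'a set \<Rightarrow> ('a \<Rightarrow> 'a \<Rightarrow> bool) \<Rightarrow> 'a list \<Rightarrow> bool" where
  "geodesic V E xs \<longleftrightarrow> walk V E xs \<and> length xs = Suc (gdist V E (hd xs) (last xs))"

definition gp_position :: "'a set \<Rightarrow> ('a \<Rightarrow> 'a \<Rightarrow> bool) \<Rightarrow> 'a set \<Rightarrow> bool" where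
  "gp_position V E S \<longleftrightarrow> S \<subseteq> V \<and>
     (\<forall>u\<in>S. \<forall>v\<in>S. \<forall>w\<in>S. u \<noteq> v \<and> v \<noteq> w \<and> u \<noteq> w \<longrightarrow>
        \<not> (\<exists>P. geodesic V E P \<and> u \<in> set P \<and> v \<in> set P \<and> w \<in> set P))"

definition gp_number :: "'a set \<Rightarrow> ('a \<Rightarrow> 'a \<Rightarrow> bool) \<Rightarrow> nat" where
  "gp_number V E = Max (card ` {S. gp_position V E S})"

definition gp_set :: "'a set \<Rightarrow> ('a \<Rightarrow> 'a \<Rightarrow> bool) \<Rightarrow> 'a set \<Rightarrow> bool" where
  "gp_set V E S \<longleftrightarrow> gp_position V E S \<and> card S = gp_number V E"

definition max_distant :: "'a set \<Rightarrow> ('a \<Rightarrow> 'a \<Rightarrow> bool) \<Rightarrow> 'a \<Rightarrow> 'a \<Rightarrow> bool" where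
  "max_distant V E u v \<longleftrightarrow> (\<forall>w. E u w \<longrightarrow> gdist V E v w \<le> gdist V E u v)"

definition MMD :: "'a set \<Rightarrow> ('a \<Rightarrow> 'a \<Rightarrow> bool) \<Rightarrow> 'a \<Rightarrow> 'a \<Rightarrow> bool" where
  "MMD V E u v \<longleftrightarrow> max_distant V E u v \<and> max_distant V E v u"

definition SR_edge :: "'a set \<Rightarrow> ('a \<Rightarrow> 'a \<Rightarrow> bool) \<Rightarrow> 'a \<Rightarrow> 'a \<Rightarrow> bool" where
  "SR_edge V E u v \<longleftrightarrow> u \<in> V \<and> v \<in> V \<and> u \<noteq> v \<and> MMD V E u v"

definition is_clique :: "'a set \<Rightarrow> ('a \<Rightarrow> 'a \<Rightarrow> bool) \<Rightarrow> 'a set \<Rightarrow> bool" where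
  "is_clique V F K \<longleftrightarrow> K \<subseteq> V \<and> (\<forall>u\<in>K. \<forall>v\<in>K. u \<noteq> v \<longrightarrow> F u v)"

definition clique_number :: "'a set \<Rightarrow> ('a \<Rightarrow> 'a \<Rightarrow> bool) \<Rightarrow> nat" where
  "clique_number V F = Max (card ` {K. is_clique V F K})"

end

theory Submission
  imports Defs
begin

(* Every clique K of the strong resolving graph is in general position: if three of its vertices
   lay on a geodesic P, the middle one, say at position j, would have the neighbour P ! Suc j
   strictly farther away from the first one (distances along a geodesic are differences of
   positions), so the first two vertices are not mutually maximally distant. Hence gp(G) is at
   least the clique number, and equality means exactly that a maximum clique of G_SR is itself a
   gp-set. *)

lemma walk_nonempty: "walk V E xs \<Longrightarrow> xs \<noteq> []"
  by (simp add: walk_def)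

lemma walk_append:
  assumes "walk V E xs" "walk V E ys" "last xs = hd ys"
  shows "walk V E (xs @ tl ys)"
proof -
  have "E ((xs @ tl ys) ! i) ((xs @ tl ys) ! Suc i)" if "Suc i < length (xs @ tl ys)" for i
  proof -
    consider "Suc i < length xs" | "Suc i = length xs" | "Suc i > length xs" by linarith
    then show ?thesis
    proof cases
      case 1
      then show ?thesis using assms(1) by (simp add: walk_def nth_append)
    next
      case 2
      have "xs ! i = hd ys" using 2 assms(1,3) by (metis diff_Suc_1 last_conv_nth walk_def)
      moreover have "E (ys ! 0) (ys ! Suc 0)" using assms(2) that 2 by (cases ys) (auto simp: walk_def)
      ultimately show ?thesis using 2 that by (cases ys) (auto simp: nth_append)
    next
      case 3
      define k where "k = i - length xs"
      have i: "i = length xs + k" using 3 k_def by simp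
      have "E (ys ! Suc k) (ys ! Suc (Suc k))" using assms(2) that i by (cases ys) (auto simp: walk_def)
      then show ?thesis using i that by (cases ys) (auto simp: nth_append)
    qed
  qed
  then show ?thesis using assms(1,2) by (auto simp: walk_def dest: list.set_sel(2))
qed

lemma walk_rev:
  assumes "walk V E xs" "\<And>u v. E u v \<Longrightarrow> E v u"
  shows "walk V E (rev xs)"
proof -
  have "E (rev xs ! i) (rev xs ! Suc i)" if "Suc i < length xs" for i
  proof -
    have "E (xs ! (length xs - Suc (Suc i))) (xs ! Suc (length xs - Suc (Suc i)))"
      using assms(1) that by (simp add: walk_def)
    moreover have "Suc (length xs - Suc (Suc i)) = length xs - Suc i" using that by simp
    ultimately show ?thesis using that assms(2) by (simp add: rev_nth)
  qed
  then show ?thesis using assms(1) by (simp add: walk_def)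
qed

lemma walk_drop_take:
  assumes "walk V E P" "i \<le> j" "j < length P"
  defines "Q \<equiv> drop i (take (Suc j) P)"
  shows "walk V E Q" "hd Q = P ! i" "last Q = P ! j" "length Q = Suc (j - i)"
proof -
  show len: "length Q = Suc (j - i)" using assms by simp
  have nth: "Q ! k = P ! (i + k)" if "k < length Q" for k using that assms by simp
  have "set Q \<subseteq> set P" unfolding Q_def by (meson in_set_dropD in_set_takeD subsetI)
  moreover have "E (Q ! k) (Q ! Suc k)" if "Suc k < length Q" for k
    using that nth[of k] nth[of "Suc k"] assms(1,3) len by (simp add: walk_def)
  ultimately show "walk V E Q" using assms(1) len by (auto simp: walk_def)
  have "Q \<noteq> []" using len by auto
  then show "hd Q = P ! i" "last Q = P ! j"
    using nth[of 0] nth[of "j - i"] len assms(2) by (simp_all add: hd_conv_nth last_conv_nth)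
qed

lemma gdist_le_walk:
  assumes "walk V E xs" "hd xs = u" "last xs = v"
  shows "gdist V E u v \<le> length xs - 1"
proof -
  have "length xs = Suc (length xs - 1)" using walk_nonempty[OF assms(1)] by simp
  then show ?thesis unfolding gdist_def using assms by (intro Least_le) blast
qed

lemma shortest_walk_exists:
  assumes "connected_graph V E" "u \<in> V" "v \<in> V"
  obtains xs where "walk V E xs" "hd xs = u" "last xs = v" "length xs = Suc (gdist V E u v)"
proof -
  obtain xs where xs: "walk V E xs" "hd xs = u" "last xs = v"
    using assms by (auto simp: connected_graph_def)
  have "length xs = Suc (length xs - 1)" using walk_nonempty[OF xs(1)] by simp
  then have "\<exists>n xs. walk V E xs \<and> hd xs = u \<and> last xs = v \<and> length xs = Suc n" using xs by blast
  then have "\<exists>xs. walk V E xs \<and> hd xs = u \<and> last xs = v \<and> length xs = Suc (gdist V E u v)"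
    unfolding gdist_def by (rule LeastI_ex)
  then show ?thesis using that by blast
qed

lemma gdist_sym:
  assumes "simple_graph V E" "connected_graph V E" "u \<in> V" "v \<in> V"
  shows "gdist V E u v = gdist V E v u"
proof -
  have le: "gdist V E a b \<le> gdist V E b a" if "a \<in> V" "b \<in> V" for a b
  proof -
    obtain xs where xs: "walk V E xs" "hd xs = b" "last xs = a" "length xs = Suc (gdist V E b a)"
      using shortest_walk_exists[OF assms(2) \<open>b \<in> V\<close> \<open>a \<in> V\<close>] .
    have "walk V E (rev xs)" using walk_rev[OF xs(1)] assms(1) by (auto simp: simple_graph_def)
    then show ?thesis
      using gdist_le_walk[of V E "rev xs" a b] xs walk_nonempty[OF xs(1)] by (simp add: hd_rev last_rev)
  qed
  show ?thesis using le[of u v] le[of v u] assms(3,4) by simp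
qed

lemma gdist_triangle:
  assumes "connected_graph V E" "u \<in> V" "v \<in> V" "w \<in> V"
  shows "gdist V E u w \<le> gdist V E u v + gdist V E v w"
proof -
  obtain xs where xs: "walk V E xs" "hd xs = u" "last xs = v" "length xs = Suc (gdist V E u v)"
    using shortest_walk_exists[OF assms(1,2,3)] .
  obtain ys where ys: "walk V E ys" "hd ys = v" "last ys = w" "length ys = Suc (gdist V E v w)"
    using shortest_walk_exists[OF assms(1,3,4)] .
  have "walk V E (xs @ tl ys)" using walk_append xs ys by fastforce
  moreover have "hd (xs @ tl ys) = u" using xs walk_nonempty[OF xs(1)] by simp
  moreover have "last (xs @ tl ys) = w" using xs ys by (cases ys) auto
  ultimately have "gdist V E u w \<le> length (xs @ tl ys) - 1" by (rule gdist_le_walk)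
  then show ?thesis using xs ys by simp
qed

lemma geodesic_gdist_nth:
  assumes "connected_graph V E" "geodesic V E P" "i \<le> j" "j < length P"
  shows "gdist V E (P ! i) (P ! j) = j - i"
proof -
  define n where "n = length P - 1"
  have W: "walk V E P" using assms(2) by (simp add: geodesic_def)
  have n: "j \<le> n" "length P = Suc n" using assms(4) walk_nonempty[OF W] by (auto simp: n_def)
  have inV: "P ! k \<in> V" if "k \<le> n" for k using W that n(2) by (auto simp: walk_def)
  have seg: "gdist V E (P ! a) (P ! b) \<le> b - a" if "a \<le> b" "b \<le> n" for a b
  proof -
    have "b < length P" using that(2) n(2) by simp
    from walk_drop_take[OF W that(1) this] show ?thesis
      using gdist_le_walk[of V E "drop a (take (Suc b) P)"] by simp
  qed
  have "n = gdist V E (P ! 0) (P ! n)"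
    using assms(2) n(2) walk_nonempty[OF W] by (simp add: geodesic_def hd_conv_nth last_conv_nth)
  also have "\<dots> \<le> gdist V E (P ! 0) (P ! i) + gdist V E (P ! i) (P ! n)"
    using gdist_triangle[OF assms(1) inV inV inV] assms(3) n(1) by simp
  also have "\<dots> \<le> gdist V E (P ! 0) (P ! i) + (gdist V E (P ! i) (P ! j) + gdist V E (P ! j) (P ! n))"
    using gdist_triangle[OF assms(1) inV inV inV] assms(3) n(1) by simp
  also have "\<dots> \<le> i + (gdist V E (P ! i) (P ! j) + (n - j))"
    using seg[of 0 i] seg[of j n] assms(3) n(1) by simp
  finally show ?thesis using seg[of i j] assms(3) n(1) by linarith
qed

lemma geodesic_interior_not_max_distant:
  assumes "simple_graph V E" "connected_graph V E" "geodesic V E P" "i < j" "Suc j < length P"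
  shows "\<not> max_distant V E (P ! j) (P ! i)"
proof
  assume md: "max_distant V E (P ! j) (P ! i)"
  have W: "walk V E P" using assms(3) by (simp add: geodesic_def)
  have inV: "P ! i \<in> V" "P ! j \<in> V" using W assms(4,5) by (auto simp: walk_def)
  have "E (P ! j) (P ! Suc j)" using W assms(5) by (simp add: walk_def)
  then have "gdist V E (P ! i) (P ! Suc j) \<le> gdist V E (P ! j) (P ! i)"
    using md by (simp add: max_distant_def)
  moreover have "gdist V E (P ! j) (P ! i) = j - i"
    using gdist_sym[OF assms(1,2) inV(2,1)] geodesic_gdist_nth[OF assms(2,3), of i j] assms(4,5) by simp
  moreover have "gdist V E (P ! i) (P ! Suc j) = Suc j - i"
    using geodesic_gdist_nth[OF assms(2,3), of i "Suc j"] assms(4,5) by simp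
  ultimately show False using assms(4) by simp
qed

lemma three_in_list_ordered:
  assumes "x \<in> set xs" "y \<in> set xs" "z \<in> set xs" "x \<noteq> y" "y \<noteq> z" "x \<noteq> z"
  obtains i j k where "i < j" "j < k" "k < length xs" "xs ! i \<in> {x, y, z}" "xs ! j \<in> {x, y, z}"
    "xs ! i \<noteq> xs ! j"
proof -
  obtain a b c where abc: "a < length xs" "xs ! a = x" "b < length xs" "xs ! b = y"
    "c < length xs" "xs ! c = z"
    using assms(1-3) unfolding in_set_conv_nth by blast
  then have "a \<noteq> b" "b \<noteq> c" "a \<noteq> c" using assms(4-6) by auto
  then consider "a < b" "b < c" | "a < c" "c < b" | "b < a" "a < c" | "b < c" "c < a"
    | "c < a" "a < b" | "c < b" "b < a" by linarith
  then show ?thesis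
  proof cases
    case 1 show ?thesis using 1 abc assms(4-6) by (intro that[of a b c]) simp_all
  next
    case 2 show ?thesis using 2 abc assms(4-6) by (intro that[of a c b]) simp_all
  next
    case 3 show ?thesis using 3 abc assms(4-6) by (intro that[of b a c]) simp_all
  next
    case 4 show ?thesis using 4 abc assms(4-6) by (intro that[of b c a]) simp_all
  next
    case 5 show ?thesis using 5 abc assms(4-6) by (intro that[of c a b]) simp_all
  next
    case 6 show ?thesis using 6 abc assms(4-6) by (intro that[of c b a]) simp_all
  qed
qed

lemma SR_clique_gp_position:
  assumes "simple_graph V E" "connected_graph V E" "is_clique V (SR_edge V E) K"
  shows "gp_position V E K"
proof -
  have False if in_K: "u \<in> K" "v \<in> K" "w \<in> K" and distinct: "u \<noteq> v" "v \<noteq> w" "u \<noteq> w"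
    and P: "geodesic V E P" "u \<in> set P" "v \<in> set P" "w \<in> set P" for u v w P
  proof -
    obtain i j k where ijk: "i < j" "j < k" "k < length P" "P ! i \<in> {u, v, w}" "P ! j \<in> {u, v, w}"
      "P ! i \<noteq> P ! j"
      using three_in_list_ordered[OF P(2-4) distinct] .
    have "P ! i \<in> K" "P ! j \<in> K" using ijk(4,5) in_K by auto
    then have "SR_edge V E (P ! i) (P ! j)" using assms(3) ijk(6) by (simp add: is_clique_def)
    then have "max_distant V E (P ! j) (P ! i)" by (simp add: SR_edge_def MMD_def)
    then show False
      using geodesic_interior_not_max_distant[OF assms(1,2) P(1) ijk(1)] ijk(2,3) by simp
  qed
  then show ?thesis using assms(3) unfolding gp_position_def is_clique_def by blast
qed

lemma finite_card_image_subsets: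
  assumes "finite V" "\<And>S. P S \<Longrightarrow> S \<subseteq> V"
  shows "finite (card ` {S. P S})"
proof -
  have "card ` {S. P S} \<subseteq> {..card V}" using assms by (auto intro: card_mono)
  then show ?thesis using finite_subset by blast
qed

lemma card_le_gp_number:
  assumes "finite V" "gp_position V E S"
  shows "card S \<le> gp_number V E"
  unfolding gp_number_def using assms
  by (intro Max_ge finite_card_image_subsets) (auto simp: gp_position_def)

lemma card_le_clique_number:
  assumes "finite V" "is_clique V F K"
  shows "card K \<le> clique_number V F"
  unfolding clique_number_def using assms
  by (intro Max_ge finite_card_image_subsets) (auto simp: is_clique_def)

lemma maximum_clique_exists:
  assumes "finite V"
  obtains K where "is_clique V F K" "card K = clique_number V F"
proof -
  have "finite (card ` {K. is_clique V F K})"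
    using finite_card_image_subsets[OF assms, of "is_clique V F"] by (simp add: is_clique_def)
  moreover have "card ` {K. is_clique V F K} \<noteq> {}" by (auto simp: is_clique_def)
  ultimately have "clique_number V F \<in> card ` {K. is_clique V F K}"
    unfolding clique_number_def by (rule Max_in)
  then show ?thesis using that by (auto elim: imageE)
qed

theorem theorem3p1:
  fixes V :: "'a set" and E :: "'a \<Rightarrow> 'a \<Rightarrow> bool"
  assumes "simple_graph V E" and "connected_graph V E"
  shows "gp_number V E \<ge> clique_number V (SR_edge V E) \<and>
         (gp_number V E = clique_number V (SR_edge V E) \<longleftrightarrow>
            (\<exists>S. gp_set V E S \<and> is_clique V (SR_edge V E) S))"
proof -
  have fin: "finite V" using assms(1) by (simp add: simple_graph_def)
  obtain K where K: "is_clique V (SR_edge V E) K" "card K = clique_number V (SR_edge V E)"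
    using maximum_clique_exists[OF fin] .
  have K_gp: "gp_position V E K" using SR_clique_gp_position[OF assms K(1)] .
  have "card K \<le> gp_number V E" using card_le_gp_number[OF fin K_gp] .
  moreover have "gp_number V E \<le> clique_number V (SR_edge V E)"
    if "gp_set V E S" "is_clique V (SR_edge V E) S" for S
    using card_le_clique_number[OF fin that(2)] that(1) by (simp add: gp_set_def)
  moreover have "gp_set V E K" if "gp_number V E = clique_number V (SR_edge V E)"
    using K(2) K_gp that by (simp add: gp_set_def)
  ultimately show ?thesis using K by (metis order_antisym)
qed

end
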